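(* Let $(S,\sqcup)$ be a left regular band and let $I$ be a $\lesssim$-ideal of $S$ that is relatively maximal with respect to not containing $d\in S$. If $a\in S$ and $a\notin I$, then there exists $i\in I$ such that $d\lesssim a\sqcup i$.
   Context: A left regular band is a set $S$ with a binary operation $\sqcup$ satisfying $a\sqcup(b\sqcup c)=(a\sqcup b)\sqcup c$, $a\sqcup a=a$, $a\sqcup b=(a\sqcup b)\sqcup a$. Write $a\lesssim b$ iff $b\sqcup a=b$ (a quasiorder). A $\lesssim$-ideal is a non-empty subset $I\subseteq S$ that is a down-set under $\lesssim$ and satisfies $i\sqcup j\in I$ for all $i,j\in I$. For $d\in S$, a $\lesssim$-ideal $I$ is relatively maximal with respect to not containing $d$ if $d\notin I$ and no $\lesssim$-ideal properly containing $I$ omits $d$. *)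

theory Defs
  imports Main
begin

definition left_regular_band :: "('a \<Rightarrow> 'a \<Rightarrow> 'a) \<Rightarrow> bool" where
  "left_regular_band j \<longleftrightarrow>
     (\<forall>a b c. j a (j b c) = j (j a b) c) \<and>
     (\<forall>a. j a a = a) \<and>
     (\<forall>a b. j a b = j (j a b) a)"

definition lrb_le :: "('a \<Rightarrow> 'a \<Rightarrow> 'a) \<Rightarrow> 'a \<Rightarrow> 'a \<Rightarrow> bool" where
  "lrb_le j a b \<longleftrightarrow> j b a = b"

definition lrb_ideal :: "('a \<Rightarrow> 'a \<Rightarrow> 'a) \<Rightarrow> 'a set \<Rightarrow> bool" where
  "lrb_ideal j I \<longleftrightarrow>
     I \<noteq> {} \<and>
     (\<forall>a b. b \<in> I \<and> lrb_le j a b \<longrightarrow> a \<in> I) \<and>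
     (\<forall>i\<in>I. \<forall>k\<in>I. j i k \<in> I)"

definition rel_max_not_containing :: "('a \<Rightarrow> 'a \<Rightarrow> 'a) \<Rightarrow> 'a \<Rightarrow> 'a set \<Rightarrow> bool" where
  "rel_max_not_containing j d I \<longleftrightarrow>
     lrb_ideal j I \<and> d \<notin> I \<and>
     (\<forall>J. lrb_ideal j J \<and> I \<subset> J \<longrightarrow> d \<in> J)"

end

theory Submission
  imports Defs
begin

text \<open>Adjoining \<open>a\<close> to the ideal \<open>I\<close> gives the ideal \<open>{x. \<exists>i\<in>I. x \<lesssim> a \<squnion> i}\<close>, which properly
  contains \<open>I\<close> when \<open>a \<notin> I\<close>; by relative maximality it contains \<open>d\<close>. The only work is to
  check that this set is closed under \<open>\<squnion>\<close>, which rests on \<open>a \<squnion> k \<lesssim> a \<squnion> i \<squnion> k\<close>.\<close>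

locale lrb =
  fixes join :: "'a \<Rightarrow> 'a \<Rightarrow> 'a"  (infixl "\<squnion>" 65)
  assumes left_regular_band: "left_regular_band (\<squnion>)"
begin

abbreviation le :: "'a \<Rightarrow> 'a \<Rightarrow> bool"  (infix "\<lesssim>" 50)
  where "x \<lesssim> y \<equiv> lrb_le (\<squnion>) x y"

lemma assoc: "x \<squnion> y \<squnion> z = x \<squnion> (y \<squnion> z)"
  and idem [simp]: "x \<squnion> x = x"
  and join_absorb_left [simp]: "x \<squnion> y \<squnion> x = x \<squnion> y"
  using left_regular_band unfolding left_regular_band_def by metis+

lemma le_trans: "x \<lesssim> y \<Longrightarrow> y \<lesssim> z \<Longrightarrow> x \<lesssim> z"
  unfolding lrb_le_def by (metis assoc)

lemma le_join_right: "x \<lesssim> u \<Longrightarrow> x \<lesssim> u \<squnion> v"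
  unfolding lrb_le_def by (metis assoc join_absorb_left)

lemma join_le: "x \<lesssim> z \<Longrightarrow> y \<lesssim> z \<Longrightarrow> x \<squnion> y \<lesssim> z"
  unfolding lrb_le_def by (metis assoc)

lemma le_join_self: "x \<lesssim> y \<squnion> x"
  unfolding lrb_le_def by (simp add: assoc)

lemma join_le_join_middle: "a \<squnion> k \<lesssim> a \<squnion> i \<squnion> k"
proof -
  have "a \<squnion> i \<squnion> k \<squnion> (a \<squnion> k) = a \<squnion> (i \<squnion> k) \<squnion> a \<squnion> k"
    by (simp only: assoc)
  also have "\<dots> = a \<squnion> (i \<squnion> k) \<squnion> k"
    by (simp only: join_absorb_left)
  also have "\<dots> = a \<squnion> i \<squnion> k"
    by (simp add: assoc)
  finally show ?thesis
    unfolding lrb_le_def .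
qed

definition adjoin :: "'a set \<Rightarrow> 'a \<Rightarrow> 'a set"
  where "adjoin I a = {x. \<exists>i\<in>I. x \<lesssim> a \<squnion> i}"

lemma subset_adjoin: "I \<subseteq> adjoin I a"
  unfolding adjoin_def using le_join_self by blast

lemma mem_adjoin: "I \<noteq> {} \<Longrightarrow> a \<in> adjoin I a"
  unfolding adjoin_def lrb_le_def by auto

lemma lrb_ideal_adjoin:
  assumes "lrb_ideal (\<squnion>) I"
  shows "lrb_ideal (\<squnion>) (adjoin I a)"
  unfolding lrb_ideal_def
proof (intro conjI allI impI ballI)
  show "adjoin I a \<noteq> {}"
    using assms mem_adjoin unfolding lrb_ideal_def by blast
next
  fix x y
  assume "y \<in> adjoin I a \<and> x \<lesssim> y"
  then show "x \<in> adjoin I a"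
    unfolding adjoin_def using le_trans by blast
next
  fix x y
  assume "x \<in> adjoin I a" "y \<in> adjoin I a"
  then obtain i k where i: "i \<in> I" "x \<lesssim> a \<squnion> i" and k: "k \<in> I" "y \<lesssim> a \<squnion> k"
    unfolding adjoin_def by blast
  have "x \<lesssim> a \<squnion> (i \<squnion> k)"
    using le_join_right[OF i(2)] by (simp add: assoc)
  moreover have "y \<lesssim> a \<squnion> (i \<squnion> k)"
    using le_trans[OF k(2) join_le_join_middle] by (simp add: assoc)
  moreover have "i \<squnion> k \<in> I"
    using assms i(1) k(1) unfolding lrb_ideal_def by blast
  ultimately show "x \<squnion> y \<in> adjoin I a"
    unfolding adjoin_def by (blast intro: join_le)
qed

end

theorem lemma2p4:
  fixes j :: "'a \<Rightarrow> 'a \<Rightarrow> 'a" and I :: "'a set" and d a :: 'a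
  assumes "left_regular_band j"
    and "rel_max_not_containing j d I"
    and "a \<notin> I"
  shows "\<exists>i\<in>I. lrb_le j d (j a i)"
proof -
  interpret lrb j
    by unfold_locales (fact assms(1))
  have ideal: "lrb_ideal j I"
    using assms(2) unfolding rel_max_not_containing_def by blast
  then have "I \<subset> adjoin I a"
    using subset_adjoin mem_adjoin assms(3) unfolding lrb_ideal_def by blast
  then have "d \<in> adjoin I a"
    using assms(2) lrb_ideal_adjoin[OF ideal] unfolding rel_max_not_containing_def by blast
  then show ?thesis
    unfolding adjoin_def by blast
qed

end
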